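(* Let $k<\omega$ and let $\mathcal E\subseteq\mathcal P(\omega)$ have the property that for every uncountable $X\subseteq\mathcal E$ there are uncountable $X_0,\dots,X_k\subseteq X$ with $\bigcap_{i\le k}\bigcup X_i$ finite. Let $\mathcal A=\{f_e:e\in\mathcal E\}$, where each $f_e$ is a function from $e$ to $\omega$ (viewed as a subset of $\omega\times\omega$). Then $\mathcal A$ has no uncountable $(k+1)$-near-Luzin subfamily: for every uncountable $\mathcal B\subseteq\mathcal A$ there are uncountable $\mathcal C_0,\dots,\mathcal C_k\subseteq\mathcal B$ with $\bigcap_{i\le k}\bigcup\mathcal C_i$ finite.
   Context: An uncountable family $\mathcal A$ is $(k+1)$-near-Luzin iff for all uncountable $\mathcal C_0,\dots,\mathcal C_k\subseteq\mathcal A$ the set $\bigcap_{i\le k}\bigcup\mathcal C_i$ is infinite. *)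

theory Defs
  imports Main "HOL-Library.Countable_Set"
begin

definition has_finite_witness :: "nat \<Rightarrow> 'a set set \<Rightarrow> bool" where
  "has_finite_witness k F \<longleftrightarrow>
     (\<exists>C :: nat \<Rightarrow> 'a set set. (\<forall>i\<le>k. C i \<subseteq> F \<and> uncountable (C i)) \<and>
        finite (\<Inter>i\<in>{..k}. \<Union>(C i)))"

definition near_luzin :: "nat \<Rightarrow> 'a set set \<Rightarrow> bool" where
  "near_luzin k A \<longleftrightarrow> uncountable A \<and>
     (\<forall>C :: nat \<Rightarrow> 'a set set. (\<forall>i\<le>k. C i \<subseteq> A \<and> uncountable (C i)) \<longrightarrow>
        infinite (\<Inter>i\<in>{..k}. \<Union>(C i)))"

definition is_fun_graph :: "nat set \<Rightarrow> (nat \<times> nat) set \<Rightarrow> bool" where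
  "is_fun_graph e g \<longleftrightarrow> (\<forall>x\<in>e. \<exists>!y. (x, y) \<in> g) \<and> (\<forall>p\<in>g. fst p \<in> e)"

end

theory Submission
  imports Defs
begin

text \<open>Pull an uncountable \<open>\<B> \<subseteq> \<A>\<close> back to \<open>\<E>\<close> (a graph determines its domain) and take
  witnesses \<open>X\<^sub>0, \<dots>, X\<^sub>k\<close> there, with finite \<open>F = \<Inter>\<^sub>i \<Union>X\<^sub>i\<close>. Every point of
  \<open>\<Inter>\<^sub>i \<Union>{f\<^sub>e : e \<in> X\<^sub>i}\<close> has first coordinate in \<open>F\<close>, and each \<open>f\<^sub>e\<close> restricted to \<open>F\<close> is one
  of countably many finite sets. Shrinking every \<open>X\<^sub>i\<close> to an uncountable subfamily on which this
  restriction is a constant \<open>s\<^sub>i\<close> confines the intersection of the unions to the finite set \<open>s\<^sub>0\<close>.\<close>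

lemma uncountable_fiber:
  assumes "uncountable C" "countable (g ` C)"
  shows "\<exists>s\<in>g ` C. uncountable {x\<in>C. g x = s}"
proof (rule ccontr)
  assume "\<not> ?thesis"
  then have "countable (\<Union>s\<in>g ` C. {x\<in>C. g x = s})"
    using assms(2) by (intro countable_UN) auto
  moreover have "(\<Union>s\<in>g ` C. {x\<in>C. g x = s}) = C" by auto
  ultimately show False using assms(1) by simp
qed

lemma uncountable_fiber_finite:
  fixes g :: "'a \<Rightarrow> 'b::countable set"
  assumes "uncountable C" "\<And>x. x \<in> C \<Longrightarrow> finite (g x)"
  shows "\<exists>s. finite s \<and> uncountable {x\<in>C. g x = s}"
proof -
  have "g ` C \<subseteq> {s. finite s}" using assms(2) by auto
  then have "countable (g ` C)" by (rule countable_subset) (rule countable_Collect_finite)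
  then show ?thesis using uncountable_fiber[OF assms(1)] assms(2) by blast
qed

lemma is_fun_graph_domain: "is_fun_graph e g \<Longrightarrow> fst ` g = e"
  unfolding is_fun_graph_def by force

lemma is_fun_graph_fst_in: "is_fun_graph e g \<Longrightarrow> p \<in> g \<Longrightarrow> fst p \<in> e"
  unfolding is_fun_graph_def by blast

lemma inj_on_fun_graphs:
  assumes "\<forall>e\<in>E. is_fun_graph e (f e)"
  shows "inj_on f E"
  by (rule inj_onI) (metis assms is_fun_graph_domain)

lemma finite_fun_graph_restrict:
  assumes "is_fun_graph e g" "finite F"
  shows "finite (g \<inter> (F \<times> UNIV))"
proof (rule finite_imageD[of fst])
  show "finite (fst ` (g \<inter> (F \<times> UNIV)))"
    using assms(2) by (rule finite_subset[rotated]) auto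
  show "inj_on fst (g \<inter> (F \<times> UNIV))"
    using assms(1) unfolding is_fun_graph_def by (intro inj_onI) (metis IntD1 prod.collapse)
qed

lemma fst_Inter_Union_fun_graphs:
  assumes "\<forall>e\<in>E. is_fun_graph e (f e)" "\<forall>i\<le>k. C i \<subseteq> E"
    and "p \<in> (\<Inter>i\<in>{..k}. \<Union>(f ` C i))"
  shows "fst p \<in> (\<Inter>i\<in>{..k}. \<Union>(C i))"
proof -
  have "fst p \<in> \<Union>(C i)" if "i \<le> k" for i
  proof -
    from assms(3) that obtain e where "e \<in> C i" "p \<in> f e" by auto
    with assms(1,2) that show ?thesis by (blast dest: is_fun_graph_fst_in)
  qed
  then show ?thesis by blast
qed

lemma finite_witness_fun_graphs:
  fixes k :: nat and C :: "nat \<Rightarrow> nat set set"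
  assumes graphs: "\<forall>e\<in>E. is_fun_graph e (f e)"
    and C: "\<forall>i\<le>k. C i \<subseteq> E \<and> uncountable (C i)"
    and fin: "finite (\<Inter>i\<in>{..k}. \<Union>(C i))"
  shows "\<exists>D. (\<forall>i\<le>k. D i \<subseteq> f ` C i \<and> uncountable (D i)) \<and> finite (\<Inter>i\<in>{..k}. \<Union>(D i))"
proof -
  define F where "F = (\<Inter>i\<in>{..k}. \<Union>(C i))"
  define trace where "trace e = f e \<inter> (F \<times> UNIV)" for e
  have "finite (trace e)" if "e \<in> E" for e
    unfolding trace_def F_def using graphs that fin by (blast intro: finite_fun_graph_restrict)
  then have "\<forall>i\<in>{..k}. \<exists>s. finite s \<and> uncountable {e\<in>C i. trace e = s}"
    using C by (blast intro: uncountable_fiber_finite)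
  then obtain s where s: "\<forall>i\<in>{..k}. finite (s i) \<and> uncountable {e\<in>C i. trace e = s i}"
    by (rule bchoice[elim_format]) blast
  define D where "D i = f ` {e\<in>C i. trace e = s i}" for i
  have "inj_on f E" using graphs by (rule inj_on_fun_graphs)
  then have D: "\<forall>i\<le>k. D i \<subseteq> f ` C i \<and> uncountable (D i)"
    using C s unfolding D_def
    by (auto dest!: countable_image_inj_on intro: inj_on_subset)
  have "(\<Inter>i\<in>{..k}. \<Union>(D i)) \<subseteq> s 0"
  proof
    fix p assume p: "p \<in> (\<Inter>i\<in>{..k}. \<Union>(D i))"
    then have "p \<in> (\<Inter>i\<in>{..k}. \<Union>(f ` C i))" unfolding D_def by blast
    then have "fst p \<in> F"
      unfolding F_def using graphs C by (intro fst_Inter_Union_fun_graphs) auto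
    moreover obtain e where "e \<in> C 0" "trace e = s 0" "p \<in> f e"
      using p unfolding D_def by auto
    ultimately show "p \<in> s 0" unfolding trace_def by (auto simp: mem_Times_iff)
  qed
  then have "finite (\<Inter>i\<in>{..k}. \<Union>(D i))"
    by (rule finite_subset) (use s in simp)
  with D show ?thesis by (intro exI[of _ D]) simp
qed

lemma near_luzin_iff_not_has_finite_witness:
  "near_luzin k B \<longleftrightarrow> uncountable B \<and> \<not> has_finite_witness k B"
  unfolding near_luzin_def has_finite_witness_def by blast

theorem lemma5p6:
  fixes k :: nat and E :: "nat set set" and f :: "nat set \<Rightarrow> (nat \<times> nat) set"
  assumes hE: "\<forall>X. X \<subseteq> E \<and> uncountable X \<longrightarrow> has_finite_witness k X"
    and hf: "\<forall>e\<in>E. is_fun_graph e (f e)"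
  shows "(\<forall>B. B \<subseteq> f ` E \<and> uncountable B \<longrightarrow> has_finite_witness k B)
         \<and> \<not> (\<exists>B \<subseteq> f ` E. near_luzin k B)"
proof -
  have witness: "has_finite_witness k B" if B: "B \<subseteq> f ` E" "uncountable B" for B
  proof -
    define X where "X = E \<inter> f -` B"
    have "X \<subseteq> E" "f ` X = B" using B(1) unfolding X_def by auto
    with B(2) have "has_finite_witness k X" using hE by auto
    then obtain C where C: "\<forall>i\<le>k. C i \<subseteq> X \<and> uncountable (C i)"
      and fin: "finite (\<Inter>i\<in>{..k}. \<Union>(C i))"
      unfolding has_finite_witness_def by blast
    have CE: "\<forall>i\<le>k. C i \<subseteq> E \<and> uncountable (C i)" using C \<open>X \<subseteq> E\<close> by blast
    obtain D where D: "\<forall>i\<le>k. D i \<subseteq> f ` C i \<and> uncountable (D i)"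
      and "finite (\<Inter>i\<in>{..k}. \<Union>(D i))"
      using finite_witness_fun_graphs[OF hf CE fin] by blast
    moreover have "\<forall>i\<le>k. D i \<subseteq> B" using C D \<open>f ` X = B\<close> by (meson image_mono order_trans)
    ultimately show ?thesis unfolding has_finite_witness_def by (intro exI[of _ D]) simp
  qed
  then show ?thesis by (auto simp: near_luzin_iff_not_has_finite_witness)
qed

end
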